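(* Let $p$ be prime and $H\le\mathrm{S}_n$ be in $\mathfrak{InP}(\mathrm{C}_p)$, with $B,K,\gamma$ as in the context, and let $H^\perp=\gamma^{-1}(\gamma(H)^\perp)$. Let $b\in B$ and $\kappa\in K$. Then $b\kappa\in N_{\mathrm{S}_n}(H)$ if and only if $b^{-1}\kappa\in N_{\mathrm{S}_n}(H^\perp)$.
   Context: $H\le\mathrm{S}_{n}$, $n=pk$, has orbits $\Omega_1,\dots,\Omega_k$ of size $p$ with each $G_i:=H|_{\Omega_i}$ cyclic of order $p$ (regarded as a subgroup of $\mathrm{S}_n$); $G=G_1\times\dots\times G_k$. For a bijection $\varphi:\Omega_1\to\Omega_j$ ($j\neq1$), $\overline\varphi$ is the involution in $\mathrm{Sym}(\Omega_1\cup\Omega_j)$ with $\alpha^{\overline\varphi}=\varphi(\alpha)$ for $\alpha\in\Omega_1$. For $2\le j\le k$, $\phi_j:\Omega_1\to\Omega_j$ witnesses a permutation isomorphism from $G_1$ to $G_j$. $B=\langle N_{\mathrm{Sym}(\Omega_i)}(G_i):1\le i\le k\rangle$, $K=\langle\overline{\phi_j}:2\le j\le k\rangle$. $g_1$ generates $G_1$, $g_j=g_1^{\overline{\phi_j}}$, and $\gamma:G\to\mathbb{F}_p^k$ is the isomorphism $\gamma(g_1^{r_1}\cdots g_k^{r_k})=(r_1,\dots,r_k)$ (elements of $\mathbb{F}_p$ identified with $0,\dots,p-1$). For a code $C\le\mathbb{F}_p^k$, $C^\perp=\{v: v\cdot c=0 \ \forall c\in C\}$ with the standard dot product. *)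

theory Defs
  imports "HOL-Computational_Algebra.Primes" "HOL-Algebra.Sym_Groups" "HOL-Algebra.Group_Action"
begin

(* Permutations of {1..n} are functions nat => nat (carrier of sym_group n).
   Every permutation of a subset A of {1..n} is regarded as an element of S_n
   fixing all points outside A. *)

definition restr :: "(nat \<Rightarrow> nat) \<Rightarrow> nat set \<Rightarrow> (nat \<Rightarrow> nat)" where
  "restr h A = (\<lambda>x. if x \<in> A then h x else x)"

definition restr_grp :: "(nat \<Rightarrow> nat) set \<Rightarrow> nat set \<Rightarrow> (nat \<Rightarrow> nat) set" where
  "restr_grp H A = (\<lambda>h. restr h A) ` H"

definition phibar :: "nat set \<Rightarrow> nat set \<Rightarrow> (nat \<Rightarrow> nat) \<Rightarrow> (nat \<Rightarrow> nat)" where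
  "phibar A B \<phi> = (\<lambda>x. if x \<in> A then \<phi> x else if x \<in> B then inv_into A \<phi> x else x)"

definition perm_iso_witness ::
  "(nat \<Rightarrow> nat) \<Rightarrow> nat set \<Rightarrow> nat set \<Rightarrow> (nat \<Rightarrow> nat) set \<Rightarrow> (nat \<Rightarrow> nat) set \<Rightarrow> bool" where
  "perm_iso_witness \<phi> A B G1 G2 \<longleftrightarrow>
     bij_betw \<phi> A B \<and>
     (\<exists>\<psi>. bij_betw \<psi> G1 G2 \<and> (\<forall>g\<in>G1. \<forall>h\<in>G1. \<psi> (g \<circ> h) = \<psi> g \<circ> \<psi> h) \<and>
          (\<forall>g\<in>G1. \<forall>x\<in>A. \<phi> (g x) = \<psi> g (\<phi> x)))"

(* the generators g_1, g_j = g_1^{\<overline>\<phi>_j} (conjugation, right-action convention) *)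
definition gens :: "nat set \<Rightarrow> (nat \<Rightarrow> nat set) \<Rightarrow> (nat \<Rightarrow> nat \<Rightarrow> nat) \<Rightarrow> (nat \<Rightarrow> nat) \<Rightarrow> nat \<Rightarrow> (nat \<Rightarrow> nat)" where
  "gens \<Omega>1 \<Omega> \<phi> g1 j = (if j = 1 then g1 else phibar \<Omega>1 (\<Omega> j) (\<phi> j) \<circ> g1 \<circ> phibar \<Omega>1 (\<Omega> j) (\<phi> j))"

(* vectors of F_p^k, entries identified with 0..p-1, indexed by 1..k *)
definition vecs :: "nat \<Rightarrow> nat \<Rightarrow> (nat \<Rightarrow> nat) set" where
  "vecs p k = {r. \<forall>i. (i \<in> {1..k} \<longrightarrow> r i < p) \<and> (i \<notin> {1..k} \<longrightarrow> r i = 0)}"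

definition elem :: "(nat \<Rightarrow> nat \<Rightarrow> nat) \<Rightarrow> nat \<Rightarrow> (nat \<Rightarrow> nat) \<Rightarrow> (nat \<Rightarrow> nat)" where
  "elem g k r = foldr (\<lambda>i f. (g i ^^ r i) \<circ> f) [1..<Suc k] id"

definition gamma :: "(nat \<Rightarrow> nat \<Rightarrow> nat) \<Rightarrow> nat \<Rightarrow> nat \<Rightarrow> (nat \<Rightarrow> nat) \<Rightarrow> (nat \<Rightarrow> nat)" where
  "gamma g p k x = (THE r. r \<in> vecs p k \<and> elem g k r = x)"

definition perp :: "nat \<Rightarrow> nat \<Rightarrow> (nat \<Rightarrow> nat) set \<Rightarrow> (nat \<Rightarrow> nat) set" where
  "perp p k C = {v \<in> vecs p k. \<forall>c\<in>C. (\<Sum>i=1..k. v i * c i) mod p = 0}"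

definition prod_grp :: "nat \<Rightarrow> nat \<Rightarrow> (nat \<Rightarrow> nat set) \<Rightarrow> (nat \<Rightarrow> (nat \<Rightarrow> nat) set) \<Rightarrow> (nat \<Rightarrow> nat) set" where
  "prod_grp n k \<Omega> Gs = {x \<in> carrier (sym_group n). \<forall>i\<in>{1..k}. restr x (\<Omega> i) \<in> Gs i}"

end

(* Conjugation by an element b of B raises each generator g_i of G_i to a power g_i^(a_i), and
   conjugation by an element kappa of K permutes the g_i. Identifying G with F_p^k through gamma,
   the product of b and kappa therefore acts by a monomial matrix M (a permutation times the
   diagonal a), and the product of b^-1 and kappa by the same permutation times the diagonal
   a^-1, which is the inverse transpose of M. The inverse transpose of M maps D^perp onto
   (M D)^perp, and C^perp^perp = C for every code C because |C| |C^perp| = p^k; so M fixes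
   C = gamma(H) iff its inverse transpose fixes C^perp. *)

theory Submission
  imports Defs "HOL-Number_Theory.Cong" "HOL-Algebra.Multiplicative_Group"
begin

(* Keeps 1 from being rewritten to Suc 0, which would break the matching of Omega 1 and {1..k}. *)
declare One_nat_def [simp del]

lemma funpow_1 [simp]: "(f :: 'a \<Rightarrow> 'a) ^^ 1 = f"
  by (simp add: One_nat_def)

section \<open>Codes over the field with p elements\<close>

definition vadd :: "nat \<Rightarrow> (nat \<Rightarrow> nat) \<Rightarrow> (nat \<Rightarrow> nat) \<Rightarrow> nat \<Rightarrow> nat" where
  "vadd p u v = (\<lambda>i. (u i + v i) mod p)"

definition smult :: "nat \<Rightarrow> nat \<Rightarrow> (nat \<Rightarrow> nat) \<Rightarrow> nat \<Rightarrow> nat" where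
  "smult p t v = (\<lambda>i. (t * v i) mod p)"

definition dot :: "nat \<Rightarrow> nat \<Rightarrow> (nat \<Rightarrow> nat) \<Rightarrow> (nat \<Rightarrow> nat) \<Rightarrow> nat" where
  "dot p k u v = (\<Sum>i=1..k. u i * v i) mod p"

definition is_code :: "nat \<Rightarrow> nat \<Rightarrow> (nat \<Rightarrow> nat) set \<Rightarrow> bool" where
  "is_code p k C \<longleftrightarrow> C \<subseteq> vecs p k \<and> (\<lambda>_. 0) \<in> C \<and> (\<forall>u\<in>C. \<forall>v\<in>C. vadd p u v \<in> C)"

lemma perp_eq: "perp p k C = {v \<in> vecs p k. \<forall>c\<in>C. dot p k v c = 0}"
  by (simp add: perp_def dot_def)

lemma vecs_less: "r \<in> vecs p k \<Longrightarrow> 0 < p \<Longrightarrow> r i < p"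
  unfolding vecs_def by (cases "i \<in> {1..k}") auto

lemma vecs_outside: "r \<in> vecs p k \<Longrightarrow> i \<notin> {1..k} \<Longrightarrow> r i = 0"
  unfolding vecs_def by auto

lemma vecs_eqI:
  "r \<in> vecs p k \<Longrightarrow> s \<in> vecs p k \<Longrightarrow> (\<And>i. i \<in> {1..k} \<Longrightarrow> r i = s i) \<Longrightarrow> r = s"
  by (rule ext) (metis vecs_outside)

lemma finite_vecs: "finite (vecs p k)"
proof -
  have "vecs p k \<subseteq> (\<lambda>f i. if i \<in> {1..k} then f i else 0) ` ({1..k} \<rightarrow>\<^sub>E {..<p})"
  proof
    fix r assume r: "r \<in> vecs p k"
    show "r \<in> (\<lambda>f i. if i \<in> {1..k} then f i else 0) ` ({1..k} \<rightarrow>\<^sub>E {..<p})"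
    proof
      show "restrict r {1..k} \<in> {1..k} \<rightarrow>\<^sub>E {..<p}"
        using r by (auto simp: vecs_def)
      show "r = (\<lambda>i. if i \<in> {1..k} then restrict r {1..k} i else 0)"
        using r by (auto simp: vecs_def)
    qed
  qed
  then show ?thesis
    by (rule finite_subset) (intro finite_imageI finite_PiE; simp)
qed

lemma zero_in_vecs: "0 < p \<Longrightarrow> (\<lambda>_. 0) \<in> vecs p k"
  by (simp add: vecs_def)

lemma vadd_in_vecs: "u \<in> vecs p k \<Longrightarrow> v \<in> vecs p k \<Longrightarrow> 0 < p \<Longrightarrow> vadd p u v \<in> vecs p k"
  unfolding vecs_def vadd_def by auto

lemma vadd_assoc: "vadd p (vadd p u v) w = vadd p u (vadd p v w)"
  unfolding vadd_def by (simp add: mod_simps add.assoc)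

lemma vadd_zero_right: "u \<in> vecs p k \<Longrightarrow> 0 < p \<Longrightarrow> vadd p u (\<lambda>_. 0) = u"
  unfolding vadd_def by (auto simp: vecs_less)

lemma vadd_right_cancel:
  assumes "u \<in> vecs p k" "v \<in> vecs p k" "0 < p" and "vadd p u w = vadd p v w"
  shows "u = v"
proof
  fix i
  have "[u i + w i = v i + w i] (mod p)"
    using assms(4) unfolding vadd_def cong_def by (metis (mono_tags))
  then have "[u i = v i] (mod p)"
    by (simp only: cong_add_rcancel_nat)
  then show "u i = v i"
    using vecs_less[OF assms(1,3)] vecs_less[OF assms(2,3)] by (simp add: cong_def)
qed

lemma vadd_smult_smult: "vadd p (smult p s v) (smult p t v) = smult p (s + t) v"
  unfolding vadd_def smult_def by (simp add: mod_simps algebra_simps)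

lemma smult_p: "smult p p v = (\<lambda>_. 0)"
  unfolding smult_def by simp

lemma code_smult_closed: "is_code p k C \<Longrightarrow> c \<in> C \<Longrightarrow> smult p t c \<in> C"
proof (induction t)
  case 0
  then show ?case by (simp add: smult_def is_code_def)
next
  case (Suc t)
  have "smult p (Suc t) c = vadd p (smult p t c) c"
    unfolding smult_def vadd_def by (simp add: mod_simps add.commute)
  then show ?case using Suc by (simp add: is_code_def)
qed

lemma dot_commute: "dot p k u v = dot p k v u"
  unfolding dot_def by (simp add: mult.commute)

lemma dot_less: "0 < p \<Longrightarrow> dot p k u v < p"
  by (simp add: dot_def)

lemma dot_zero_left: "dot p k (\<lambda>_. 0) v = 0"
  by (simp add: dot_def)

lemma dot_zero_right: "dot p k u (\<lambda>_. 0) = 0"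
  by (simp add: dot_def)

lemma dot_vadd_right: "dot p k w (vadd p u v) = (dot p k w u + dot p k w v) mod p"
proof -
  have "dot p k w (vadd p u v) = (\<Sum>i=1..k. w i * u i + w i * v i) mod p"
    unfolding dot_def vadd_def
    by (rule mod_sum_eq[symmetric, THEN trans]) (simp add: mod_simps distrib_left)
  then show ?thesis
    by (simp add: dot_def sum.distrib mod_simps)
qed

lemma dot_vadd_left: "dot p k (vadd p u v) w = (dot p k u w + dot p k v w) mod p"
  by (metis dot_commute dot_vadd_right)

lemma dot_smult_right: "dot p k w (smult p t v) = (t * dot p k w v) mod p"
proof -
  have "dot p k w (smult p t v) = (\<Sum>i=1..k. t * (w i * v i)) mod p"
    unfolding dot_def smult_def
    by (rule mod_sum_eq[symmetric, THEN trans]) (simp add: mod_simps algebra_simps)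
  then show ?thesis
    by (simp add: dot_def sum_distrib_left mod_simps)
qed

lemma unit_vec_in_vecs: "1 < p \<Longrightarrow> i \<in> {1..k} \<Longrightarrow> (\<lambda>j. if j = i then 1 else 0) \<in> vecs p k"
  by (auto simp: vecs_def)

lemma dot_unit_vec: "i \<in> {1..k} \<Longrightarrow> dot p k (\<lambda>j. if j = i then 1 else 0) v = v i mod p"
  unfolding dot_def by (simp add: if_distrib[of "\<lambda>x. x * _"] cong: if_cong)

lemma vecs_eq_if_dot_eq:
  assumes "1 < p" "u \<in> vecs p k" "v \<in> vecs p k"
    and "\<And>w. w \<in> vecs p k \<Longrightarrow> dot p k w u = dot p k w v"
  shows "u = v"
proof (rule vecs_eqI[OF assms(2,3)])
  fix i assume "i \<in> {1..k}"
  then have "u i mod p = v i mod p"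
    using assms(4)[OF unit_vec_in_vecs[OF assms(1)]] by (simp add: dot_unit_vec)
  then show "u i = v i"
    using assms(1-3) vecs_less by simp
qed

lemma orthogonal_to_vecs_iff:
  assumes "1 < p" "u \<in> vecs p k"
  shows "(\<forall>v\<in>vecs p k. dot p k u v = 0) \<longleftrightarrow> u = (\<lambda>_. 0)"
proof
  assume orth: "\<forall>v\<in>vecs p k. dot p k u v = 0"
  show "u = (\<lambda>_. 0)"
  proof (rule vecs_eq_if_dot_eq[OF assms zero_in_vecs])
    fix w assume "w \<in> vecs p k"
    then show "dot p k w u = dot p k w (\<lambda>_. 0)"
      using orth by (simp add: dot_commute[of p k w] dot_zero_right)
  qed (use assms in simp)
qed (simp add: dot_commute[of p k "\<lambda>_. 0"] dot_zero_right)

lemma dot_nonzero_coprime: "prime p \<Longrightarrow> dot p k w v \<noteq> 0 \<Longrightarrow> coprime (dot p k w v) p"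
  using dot_less[of p k w v] prime_gt_0_nat[of p]
  by (metis coprime_commute dvd_imp_le neq0_conv not_le prime_imp_coprime)

lemma inj_on_kernel_translates:
  assumes p: "prime p" and S: "S \<subseteq> vecs p k" and w: "dot p k w s0 \<noteq> 0"
  shows "inj_on (\<lambda>(s, t). vadd p s (smult p t s0)) ({s \<in> S. dot p k w s = 0} \<times> {..<p})"
proof (rule inj_onI, clarify)
  let ?d = "dot p k w s0"
  fix s1 t1 s2 t2
  assume s: "s1 \<in> S" "dot p k w s1 = 0" "s2 \<in> S" "dot p k w s2 = 0"
    and t: "t1 < p" "t2 < p" and eq: "vadd p s1 (smult p t1 s0) = vadd p s2 (smult p t2 s0)"
  have "[t1 * ?d = t2 * ?d] (mod p)"
    using arg_cong[OF eq, of "dot p k w"] s by (simp add: dot_vadd_right dot_smult_right cong_def)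
  then have "[t1 = t2] (mod p)"
    using dot_nonzero_coprime[OF p w] cong_mult_rcancel_nat by blast
  then have "t1 = t2"
    using t by (simp add: cong_def)
  moreover from this have "s1 = s2"
    using eq s S p prime_gt_0_nat by (intro vadd_right_cancel[of s1 p k s2]) auto
  ultimately show "s1 = s2 \<and> t1 = t2" by simp
qed

lemma code_eq_kernel_translates:
  assumes p: "prime p" and S: "is_code p k S" and s0: "s0 \<in> S" and w: "dot p k w s0 \<noteq> 0"
  shows "(\<lambda>(s, t). vadd p s (smult p t s0)) ` ({s \<in> S. dot p k w s = 0} \<times> {..<p}) = S"
proof
  let ?K = "{s \<in> S. dot p k w s = 0}" and ?d = "dot p k w s0"
  have p0: "0 < p" using p prime_gt_0_nat by blast
  show "(\<lambda>(s, t). vadd p s (smult p t s0)) ` (?K \<times> {..<p}) \<subseteq> S"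
    using S code_smult_closed[OF S s0] by (auto simp: is_code_def)
  show "S \<subseteq> (\<lambda>(s, t). vadd p s (smult p t s0)) ` (?K \<times> {..<p})"
  proof
    fix s assume s: "s \<in> S"
    obtain e where e: "[?d * e = 1] (mod p)"
      using cong_solve_coprime_nat[OF dot_nonzero_coprime[OF p w]] by (auto simp: One_nat_def)
    define t where "t = (e * dot p k w s) mod p"
    define s' where "s' = vadd p s (smult p (p - t) s0)"
    have t: "t < p" using p0 by (simp add: t_def)
    have "[t * ?d = (?d * e) * dot p k w s] (mod p)"
      unfolding t_def cong_def by (metis mod_mult_left_eq mult.assoc mult.commute)
    also have "[(?d * e) * dot p k w s = 1 * dot p k w s] (mod p)"
      by (rule cong_mult[OF e cong_refl])
    finally have "(dot p k w s + (p - t) * ?d) mod p = (t * ?d + (p - t) * ?d) mod p"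
      by (metis cong_add_rcancel_nat cong_def mult_1)
    also have "\<dots> = 0"
      using t by (simp add: add_mult_distrib[symmetric])
    finally have "s' \<in> ?K"
      using S s code_smult_closed[OF S s0]
      by (simp add: s'_def dot_vadd_right dot_smult_right mod_simps is_code_def)
    moreover have "s \<in> vecs p k"
      using s S by (auto simp: is_code_def)
    then have "vadd p s' (smult p t s0) = s"
      using t p0 by (simp add: s'_def vadd_assoc vadd_smult_smult smult_p vadd_zero_right)
    ultimately show "s \<in> (\<lambda>(s, t). vadd p s (smult p t s0)) ` (?K \<times> {..<p})"
      using t by force
  qed
qed

lemma card_code_eq_p_mult_card_kernel:
  assumes p: "prime p" and S: "is_code p k S" and s0: "s0 \<in> S" and w: "dot p k w s0 \<noteq> 0"
  shows "card S = p * card {s \<in> S. dot p k w s = 0}"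
proof -
  have "S \<subseteq> vecs p k"
    using S by (simp add: is_code_def)
  then have "bij_betw (\<lambda>(s, t). vadd p s (smult p t s0)) ({s \<in> S. dot p k w s = 0} \<times> {..<p}) S"
    unfolding bij_betw_def
    using inj_on_kernel_translates[OF p _ w] code_eq_kernel_translates[OF assms] by blast
  then show ?thesis
    by (simp add: bij_betw_same_card[symmetric] card_cartesian_product)
qed

lemma code_vecs: "0 < p \<Longrightarrow> is_code p k (vecs p k)"
  by (simp add: is_code_def zero_in_vecs vadd_in_vecs)

lemma finite_code: "is_code p k C \<Longrightarrow> finite C"
  unfolding is_code_def using finite_vecs finite_subset by blast

lemma p_mult_card_kernel:
  assumes "prime p" "is_code p k S"
  shows "p * card {s \<in> S. dot p k w s = 0} = (if \<forall>s\<in>S. dot p k w s = 0 then p * card S else card S)"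
proof (cases "\<forall>s\<in>S. dot p k w s = 0")
  case True
  then have "{s \<in> S. dot p k w s = 0} = S" by blast
  then show ?thesis using True by simp
next
  case False
  then show ?thesis using card_code_eq_p_mult_card_kernel[OF assms] by auto
qed

lemma p_mult_count_by_codewords:
  assumes p: "prime p" and C: "is_code p k C"
  shows "p * (\<Sum>c\<in>C. card {v \<in> vecs p k. dot p k c v = 0})
    = (p - 1) * card (vecs p k) + card C * card (vecs p k)"
proof -
  let ?V = "vecs p k" and ?z = "\<lambda>_. 0 :: nat"
  have p1: "1 < p" using p prime_gt_1_nat by blast
  have CV: "C \<subseteq> ?V" and z: "?z \<in> C" and finC: "finite C"
    using C finite_code by (auto simp: is_code_def)
  have "p * (\<Sum>c\<in>C. card {v \<in> ?V. dot p k c v = 0}) = (\<Sum>c\<in>C. if c = ?z then p * card ?V else card ?V)"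
    unfolding sum_distrib_left
  proof (rule sum.cong)
    fix c assume "c \<in> C"
    then show "p * card {v \<in> ?V. dot p k c v = 0} = (if c = ?z then p * card ?V else card ?V)"
      using p_mult_card_kernel[OF p code_vecs, of k c] orthogonal_to_vecs_iff[OF p1, of c] CV p1
      by auto
  qed simp
  also have "\<dots> = p * card ?V + (card C - 1) * card ?V"
  proof -
    have "C \<inter> {c. c = ?z} = {?z}" and "C \<inter> - {c. c = ?z} = C - {?z}"
      using z by auto
    then show ?thesis
      using z finC by (simp add: sum.If_cases card_Diff_singleton)
  qed
  moreover have "card C \<noteq> 0"
    using z finC by auto
  ultimately show ?thesis
    using p1 by (cases "card C"; cases p) (simp_all add: algebra_simps)
qed

lemma p_mult_count_by_vectors:
  assumes p: "prime p" and C: "is_code p k C"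
  shows "p * (\<Sum>v\<in>vecs p k. card {c \<in> C. dot p k v c = 0})
    = (p - 1) * (card (perp p k C) * card C) + card (vecs p k) * card C"
proof -
  let ?V = "vecs p k" and ?P = "perp p k C"
  have p1: "1 < p" using p prime_gt_1_nat by blast
  have PV: "?P \<subseteq> ?V" by (auto simp: perp_def)
  have "p * (\<Sum>v\<in>?V. card {c \<in> C. dot p k v c = 0}) = (\<Sum>v\<in>?V. if v \<in> ?P then p * card C else card C)"
    unfolding sum_distrib_left
    using p_mult_card_kernel[OF p C] by (intro sum.cong) (auto simp: perp_eq)
  also have "\<dots> = card ?P * (p * card C) + (card ?V - card ?P) * card C"
    using PV finite_vecs finite_subset[OF PV finite_vecs]
    by (simp add: sum.If_cases Int_absorb1 Int_commute Diff_eq[symmetric] card_Diff_subset)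
  finally show ?thesis
    using card_mono[OF finite_vecs PV] p1 by (simp add: algebra_simps diff_mult_distrib)
qed

lemma card_code_mult_card_perp:
  assumes p: "prime p" and C: "is_code p k C"
  shows "card C * card (perp p k C) = card (vecs p k)"
proof -
  have "(\<Sum>c\<in>C. card {v \<in> vecs p k. dot p k c v = 0}) = (\<Sum>v\<in>vecs p k. card {c \<in> C. dot p k v c = 0})"
    unfolding card_eq_sum sum.inter_filter[OF finite_vecs] sum.inter_filter[OF finite_code[OF C]]
    by (subst sum.swap) (simp add: dot_commute)
  then have "(p - 1) * card (vecs p k) + card C * card (vecs p k)
      = (p - 1) * (card (perp p k C) * card C) + card (vecs p k) * card C"
    using p_mult_count_by_codewords[OF assms] p_mult_count_by_vectors[OF assms] by metis
  then have "(p - 1) * card (vecs p k) = (p - 1) * (card C * card (perp p k C))"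
    by (simp add: mult.commute)
  then show ?thesis
    using prime_gt_1_nat[OF p] by simp
qed

lemma code_perp: "0 < p \<Longrightarrow> is_code p k (perp p k C)"
  unfolding is_code_def perp_eq
  by (auto simp: zero_in_vecs vadd_in_vecs dot_zero_left dot_vadd_left)

lemma subset_perp_perp: "D \<subseteq> vecs p k \<Longrightarrow> D \<subseteq> perp p k (perp p k D)"
  by (auto simp: perp_eq dot_commute)

lemma perp_perp:
  assumes p: "prime p" and C: "is_code p k C"
  shows "perp p k (perp p k C) = C"
proof -
  let ?P = "perp p k C"
  have p0: "0 < p" using p prime_gt_0_nat by blast
  have "card ?P * card (perp p k ?P) = card ?P * card C"
    using card_code_mult_card_perp[OF p C] card_code_mult_card_perp[OF p code_perp[OF p0]]
    by (simp add: mult.commute)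
  moreover have "card ?P \<noteq> 0"
    using code_perp[OF p0] finite_code[OF code_perp[OF p0]] unfolding is_code_def
    by (metis card_0_eq empty_iff)
  ultimately have "card (perp p k ?P) = card C" by simp
  then show ?thesis
    using C subset_perp_perp finite_code[OF code_perp[OF p0]]
    by (metis card_subset_eq is_code_def)
qed

lemma inj_on_adjoint:
  assumes "1 < p"
    and adjoint: "\<And>u v. u \<in> vecs p k \<Longrightarrow> v \<in> vecs p k \<Longrightarrow> dot p k (M' u) (M v) = dot p k u v"
  shows "inj_on M (vecs p k)"
proof (rule inj_onI)
  fix v1 v2 assume v: "v1 \<in> vecs p k" "v2 \<in> vecs p k" and eq: "M v1 = M v2"
  show "v1 = v2"
  proof (rule vecs_eq_if_dot_eq[OF \<open>1 < p\<close> v])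
    fix w assume "w \<in> vecs p k"
    then show "dot p k w v1 = dot p k w v2"
      using adjoint[of w v1] adjoint[of w v2] v eq by simp
  qed
qed

lemma image_perp_adjoint:
  assumes "1 < p" and D: "D \<subseteq> vecs p k" and M': "M' ` vecs p k \<subseteq> vecs p k"
    and adjoint: "\<And>u v. u \<in> vecs p k \<Longrightarrow> v \<in> vecs p k \<Longrightarrow> dot p k (M' u) (M v) = dot p k u v"
  shows "M' ` perp p k D = perp p k (M ` D)"
proof
  show "M' ` perp p k D \<subseteq> perp p k (M ` D)"
    using D M' adjoint by (auto simp: perp_eq subset_eq)
  have "inj_on M' (vecs p k)"
    using \<open>1 < p\<close> by (rule inj_on_adjoint[where M' = M]) (metis adjoint dot_commute)
  then have surj_M': "M' ` vecs p k = vecs p k"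
    by (rule endo_inj_surj[OF finite_vecs M'])
  show "perp p k (M ` D) \<subseteq> M' ` perp p k D"
  proof
    fix w assume w: "w \<in> perp p k (M ` D)"
    then obtain u where u: "u \<in> vecs p k" "w = M' u"
      using surj_M' by (auto simp: perp_eq)
    then have "u \<in> perp p k D"
      using w D adjoint by (auto simp: perp_eq subset_eq)
    then show "w \<in> M' ` perp p k D" using u by blast
  qed
qed

lemma image_code_eq_iff_adjoint_image_perp_eq:
  assumes p: "prime p" and C: "is_code p k C"
    and M: "M ` vecs p k \<subseteq> vecs p k" and M': "M' ` vecs p k \<subseteq> vecs p k"
    and adjoint: "\<And>u v. u \<in> vecs p k \<Longrightarrow> v \<in> vecs p k \<Longrightarrow> dot p k (M' u) (M v) = dot p k u v"
  shows "M ` C = C \<longleftrightarrow> M' ` perp p k C = perp p k C"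
proof -
  have p1: "1 < p" using p prime_gt_1_nat by blast
  have CV: "C \<subseteq> vecs p k" using C by (simp add: is_code_def)
  note perp_image = image_perp_adjoint[OF p1 CV M' adjoint]
  show ?thesis
  proof
    assume "M ` C = C"
    then show "M' ` perp p k C = perp p k C" using perp_image by simp
  next
    assume "M' ` perp p k C = perp p k C"
    then have "perp p k (M ` C) = perp p k C" using perp_image by simp
    moreover have "M ` C \<subseteq> vecs p k"
      using CV M by blast
    ultimately have "M ` C \<subseteq> C"
      using subset_perp_perp[of "M ` C" p k] perp_perp[OF p C] by simp
    moreover have "card (M ` C) = card C"
      using inj_on_subset[OF inj_on_adjoint[OF p1 adjoint] CV] by (rule card_image)
    ultimately show "M ` C = C"
      using finite_code[OF C] by (simp add: card_subset_eq)
  qed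
qed

definition monomial_map ::
  "nat \<Rightarrow> nat \<Rightarrow> (nat \<Rightarrow> nat) \<Rightarrow> (nat \<Rightarrow> nat) \<Rightarrow> (nat \<Rightarrow> nat) \<Rightarrow> nat \<Rightarrow> nat" where
  "monomial_map p k \<pi> a r = (\<lambda>j. if j \<in> {1..k} then (a (inv' \<pi> j) * r (inv' \<pi> j)) mod p else 0)"

lemma monomial_map_apply:
  "\<pi> permutes {1..k} \<Longrightarrow> i \<in> {1..k} \<Longrightarrow> monomial_map p k \<pi> a r (\<pi> i) = (a i * r i) mod p"
proof -
  assume \<pi>: "\<pi> permutes {1..k}" and i: "i \<in> {1..k}"
  then have "\<pi> i \<in> {1..k}" by (simp only: permutes_in_image)
  then show ?thesis by (simp add: monomial_map_def permutes_inverses[OF \<pi>])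
qed

lemma monomial_map_in_vecs: "0 < p \<Longrightarrow> monomial_map p k \<pi> a r \<in> vecs p k"
  unfolding monomial_map_def vecs_def by auto

lemma dot_monomial_map_inverse:
  assumes \<pi>: "\<pi> permutes {1..k}" and inverse: "\<And>i. i \<in> {1..k} \<Longrightarrow> [a' i * a i = 1] (mod p)"
  shows "dot p k (monomial_map p k \<pi> a' u) (monomial_map p k \<pi> a v) = dot p k u v"
proof -
  have term_eq: "(a' i * u i) mod p * ((a i * v i) mod p) mod p = u i * v i mod p" if i: "i \<in> {1..k}" for i
  proof -
    have "(a' i * u i) mod p * ((a i * v i) mod p) mod p = ((a' i * a i) * (u i * v i)) mod p"
      by (simp add: mod_mult_eq ac_simps)
    also have "\<dots> = (1 * (u i * v i)) mod p"
      using cong_mult[OF inverse[OF i] cong_refl] by (simp add: cong_def)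
    finally show ?thesis by simp
  qed
  let ?f = "\<lambda>j. monomial_map p k \<pi> a' u j * monomial_map p k \<pi> a v j"
  have "sum ?f {1..k} = sum (?f \<circ> \<pi>) {1..k}"
    by (rule sum.permute[OF \<pi>])
  also have "\<dots> = (\<Sum>i=1..k. ((a' i * u i) mod p) * ((a i * v i) mod p))"
    by (simp add: monomial_map_apply[OF \<pi>])
  finally have "dot p k (monomial_map p k \<pi> a' u) (monomial_map p k \<pi> a v)
      = (\<Sum>i=1..k. ((a' i * u i) mod p) * ((a i * v i) mod p)) mod p"
    by (simp add: dot_def)
  also have "\<dots> = (\<Sum>i=1..k. ((a' i * u i) mod p) * ((a i * v i) mod p) mod p) mod p"
    by (rule mod_sum_eq[symmetric])
  also have "\<dots> = (\<Sum>i=1..k. u i * v i mod p) mod p"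
    by (rule arg_cong[where f = "\<lambda>x. x mod p"], rule sum.cong[OF refl term_eq])
  also have "\<dots> = (\<Sum>i=1..k. u i * v i) mod p"
    by (rule mod_sum_eq)
  finally show ?thesis by (simp add: dot_def)
qed

section \<open>Permutations acting blockwise by cyclic groups\<close>

lemma foldr_comp_Cons: "foldr (\<lambda>j f. F j \<circ> f) (j # L) id = F j \<circ> foldr (\<lambda>j f. F j \<circ> f) L id"
  by simp

lemma conj_funpow: "bij \<sigma> \<Longrightarrow> \<sigma> \<circ> f ^^ t \<circ> inv' \<sigma> = (\<sigma> \<circ> f \<circ> inv' \<sigma>) ^^ t"
proof (induction t)
  case 0
  then show ?case using surj_f_inv_f[OF bij_is_surj[OF 0]] by (simp add: fun_eq_iff)
next
  case (Suc t)
  have "\<sigma> \<circ> f ^^ Suc t \<circ> inv' \<sigma> = (\<sigma> \<circ> f \<circ> inv' \<sigma>) \<circ> (\<sigma> \<circ> f ^^ t \<circ> inv' \<sigma>)"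
    using Suc.prems by (simp add: fun_eq_iff bij_is_inj)
  also have "\<dots> = (\<sigma> \<circ> f \<circ> inv' \<sigma>) ^^ Suc t"
    by (simp only: Suc funpow.simps(2))
  finally show ?case .
qed

lemma conj_comp: "bij \<sigma> \<Longrightarrow> bij \<tau> \<Longrightarrow> (\<sigma> \<circ> \<tau>) \<circ> f \<circ> inv' (\<sigma> \<circ> \<tau>) = \<sigma> \<circ> (\<tau> \<circ> f \<circ> inv' \<tau>) \<circ> inv' \<sigma>"
  by (simp add: o_inv_distrib comp_assoc)

lemma conj_disjoint_permutes:
  assumes f: "f permutes A" and \<sigma>: "\<sigma> permutes B" and "A \<inter> B = {}"
  shows "\<sigma> \<circ> f \<circ> inv' \<sigma> = f"
proof -
  have "\<sigma> \<circ> f = f \<circ> \<sigma>"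
  proof
    fix x
    consider "x \<in> A" | "x \<in> B" | "x \<notin> A" "x \<notin> B" by blast
    then show "(\<sigma> \<circ> f) x = (f \<circ> \<sigma>) x"
    proof cases
      case 1
      moreover have "f x \<in> A"
        using 1 by (simp add: permutes_in_image[OF f])
      ultimately have "x \<notin> B" "f x \<notin> B"
        using \<open>A \<inter> B = {}\<close> by auto
      then show ?thesis by (simp add: permutes_not_in[OF \<sigma>])
    next
      case 2
      moreover have "\<sigma> x \<in> B"
        using 2 by (simp add: permutes_in_image[OF \<sigma>])
      ultimately have "x \<notin> A" "\<sigma> x \<notin> A"
        using \<open>A \<inter> B = {}\<close> by auto
      then show ?thesis by (simp add: permutes_not_in[OF f])
    qed (simp add: permutes_not_in[OF f] permutes_not_in[OF \<sigma>])
  qed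
  then show ?thesis
    by (simp add: comp_assoc permutes_inv_o(1)[OF \<sigma>])
qed

lemma normalizer_sym_group_iff:
  assumes "S \<subseteq> carrier (sym_group n)"
  shows "\<sigma> \<in> normalizer (sym_group n) S \<longleftrightarrow> \<sigma> permutes {1..n} \<and> (\<lambda>h. \<sigma> \<circ> h \<circ> inv' \<sigma>) ` S = S"
proof -
  have "\<sigma> <#\<^bsub>sym_group n\<^esub> S #>\<^bsub>sym_group n\<^esub> inv' \<sigma> = (\<lambda>h. \<sigma> \<circ> h \<circ> inv' \<sigma>) ` S"
    by (auto simp: l_coset_def r_coset_def sym_group_def)
  then show ?thesis
    using assms by (auto simp: normalizer_def stabilizer_def sym_group_carrier)
qed

locale block_cycles =
  fixes p n k :: nat and \<Omega> :: "nat \<Rightarrow> nat set" and g :: "nat \<Rightarrow> nat \<Rightarrow> nat"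
  assumes prime_p: "prime p"
    and blocks_disjoint: "\<And>i j. i \<in> {1..k} \<Longrightarrow> j \<in> {1..k} \<Longrightarrow> i \<noteq> j \<Longrightarrow> \<Omega> i \<inter> \<Omega> j = {}"
    and blocks_cover: "(\<Union>i\<in>{1..k}. \<Omega> i) = {1..n}"
    and blocks_nonempty: "\<And>i. i \<in> {1..k} \<Longrightarrow> \<Omega> i \<noteq> {}"
    and g_permutes: "\<And>i. i \<in> {1..k} \<Longrightarrow> g i permutes \<Omega> i"
    and g_pow_p: "\<And>i. i \<in> {1..k} \<Longrightarrow> g i ^^ p = id"
    and g_fixpoint_free: "\<And>i x. i \<in> {1..k} \<Longrightarrow> x \<in> \<Omega> i \<Longrightarrow> g i x \<noteq> x"
begin

lemma p_gt_1: "1 < p"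
  using prime_p prime_gt_1_nat by blast

lemma block_subset: "i \<in> {1..k} \<Longrightarrow> \<Omega> i \<subseteq> {1..n}"
  using blocks_cover by blast

lemma block_unique: "i \<in> {1..k} \<Longrightarrow> j \<in> {1..k} \<Longrightarrow> x \<in> \<Omega> i \<Longrightarrow> x \<in> \<Omega> j \<Longrightarrow> i = j"
  using blocks_disjoint by blast

lemma g_pow_permutes: "i \<in> {1..k} \<Longrightarrow> g i ^^ t permutes \<Omega> i"
  by (simp add: g_permutes permutes_funpow)

lemma g_pow_permutes_all: "i \<in> {1..k} \<Longrightarrow> g i ^^ t permutes {1..n}"
  using g_pow_permutes block_subset permutes_subset by blast

lemma g_pow_mod: "i \<in> {1..k} \<Longrightarrow> g i ^^ t = g i ^^ (t mod p)"
  using funpow_mod_eq[where f = "g i" and n = p] g_pow_p by (simp add: fun_eq_iff)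

lemma g_pow_fixpoint_free:
  assumes i: "i \<in> {1..k}" and x: "x \<in> \<Omega> i" and t: "\<not> p dvd t"
  shows "(g i ^^ t) x \<noteq> x"
proof
  assume fix_x: "(g i ^^ t) x = x"
  have "coprime t p"
    using t prime_p by (simp add: prime_imp_coprime coprime_commute)
  then obtain m where m: "[t * m = 1] (mod p)"
    using cong_solve_coprime_nat by (auto simp: One_nat_def)
  have "((g i ^^ t) ^^ m) x = x"
    by (induction m) (simp_all add: fix_x)
  moreover have "(g i ^^ t) ^^ m = g i"
    using m p_gt_1 g_pow_mod[OF i, of "t * m"] by (simp add: funpow_mult mult.commute cong_def)
  ultimately show False
    using g_fixpoint_free[OF i x] by simp
qed

lemma g_pow_eq_imp_cong:
  assumes i: "i \<in> {1..k}" and eq: "g i ^^ s = g i ^^ t"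
  shows "[s = t] (mod p)"
proof -
  have main: "p dvd d" if "g i ^^ s = g i ^^ (s + d)" for s d
  proof (rule ccontr)
    assume "\<not> p dvd d"
    obtain x where x: "x \<in> \<Omega> i" using blocks_nonempty[OF i] by blast
    let ?y = "(g i ^^ s) x"
    have "?y \<in> \<Omega> i"
      using x g_pow_permutes[OF i] by (simp add: permutes_in_image)
    moreover have "(g i ^^ d) ?y = ?y"
      using that by (metis comp_apply funpow_add add.commute)
    ultimately show False
      using g_pow_fixpoint_free[OF i] \<open>\<not> p dvd d\<close> by blast
  qed
  show ?thesis
  proof (cases "s \<le> t")
    case True
    then have "p dvd t - s"
      using main[of s "t - s"] eq by simp
    then show ?thesis
      using True by (metis cong_def mod_eq_dvd_iff_nat)
  next
    case False
    then have "p dvd s - t"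
      using main[of t "s - t"] eq by simp
    then show ?thesis
      using False by (metis cong_def mod_eq_dvd_iff_nat nat_le_linear)
  qed
qed

lemma foldr_block_powers_apply:
  assumes "set L \<subseteq> {1..k}" "distinct L" "i \<in> {1..k}" "x \<in> \<Omega> i"
  shows "foldr (\<lambda>j f. g j ^^ r j \<circ> f) L id x = (if i \<in> set L then (g i ^^ r i) x else x)"
  using assms
proof (induction L)
  case (Cons j L)
  let ?y = "foldr (\<lambda>j f. g j ^^ r j \<circ> f) L id x"
  have j: "j \<in> {1..k}"
    using Cons.prems by simp
  have IH: "?y = (if i \<in> set L then (g i ^^ r i) x else x)"
    by (rule Cons.IH) (use Cons.prems in auto)
  have step: "foldr (\<lambda>j f. g j ^^ r j \<circ> f) (j # L) id x = (g j ^^ r j) ?y"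
    by (simp only: foldr_comp_Cons comp_apply)
  show ?case
  proof (cases "j = i")
    case True
    then show ?thesis unfolding step IH using Cons.prems(2) by auto
  next
    case False
    have "?y \<in> \<Omega> i"
      unfolding IH using Cons.prems(4) g_pow_permutes[OF Cons.prems(3)] by (simp add: permutes_in_image)
    then have "?y \<notin> \<Omega> j"
      using block_unique[OF Cons.prems(3) j] False by blast
    then have "(g j ^^ r j) ?y = ?y"
      by (rule permutes_not_in[OF g_pow_permutes[OF j]])
    then show ?thesis unfolding step IH using False by simp
  qed
qed simp

lemma foldr_block_powers_permutes:
  "set L \<subseteq> {1..k} \<Longrightarrow> foldr (\<lambda>j f. g j ^^ r j \<circ> f) L id permutes {1..n}"
proof (induction L)
  case (Cons j L)
  have "foldr (\<lambda>j f. g j ^^ r j \<circ> f) L id permutes {1..n}"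
    by (rule Cons.IH) (use Cons.prems in simp)
  then show ?case
    unfolding foldr_comp_Cons by (rule permutes_compose[OF _ g_pow_permutes_all]) (use Cons.prems in simp)
qed (simp add: permutes_id)

lemma elem_apply: "i \<in> {1..k} \<Longrightarrow> x \<in> \<Omega> i \<Longrightarrow> elem g k r x = (g i ^^ r i) x"
  unfolding elem_def by (subst foldr_block_powers_apply) auto

lemma elem_permutes: "elem g k r permutes {1..n}"
  unfolding elem_def by (rule foldr_block_powers_permutes) auto

lemma elem_eqI:
  assumes "\<And>i x. i \<in> {1..k} \<Longrightarrow> x \<in> \<Omega> i \<Longrightarrow> f x = (g i ^^ r i) x"
    and "\<And>x. x \<notin> {1..n} \<Longrightarrow> f x = x"
  shows "f = elem g k r"
proof
  fix x
  show "f x = elem g k r x"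
  proof (cases "x \<in> {1..n}")
    case True
    then obtain i where "i \<in> {1..k}" "x \<in> \<Omega> i"
      using blocks_cover by blast
    then show ?thesis using assms(1) elem_apply by simp
  next
    case False
    then show ?thesis using assms(2) permutes_not_in[OF elem_permutes] by simp
  qed
qed

lemma restr_elem: "i \<in> {1..k} \<Longrightarrow> restr (elem g k r) (\<Omega> i) = g i ^^ r i"
  by (auto simp: restr_def fun_eq_iff elem_apply permutes_not_in[OF g_pow_permutes])

lemma inj_on_elem: "inj_on (elem g k) (vecs p k)"
proof
  fix r s assume r: "r \<in> vecs p k" and s: "s \<in> vecs p k" and eq: "elem g k r = elem g k s"
  show "r = s"
  proof (rule vecs_eqI[OF r s])
    fix i assume i: "i \<in> {1..k}"
    have "g i ^^ r i = g i ^^ s i"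
      using restr_elem[OF i, of r] restr_elem[OF i, of s] eq by simp
    then have "[r i = s i] (mod p)"
      by (rule g_pow_eq_imp_cong[OF i])
    then show "r i = s i"
      using vecs_less[OF r] vecs_less[OF s] p_gt_1 by (simp add: cong_def)
  qed
qed

lemma elem_vadd: "elem g k (vadd p u v) = elem g k u \<circ> elem g k v"
proof (rule sym, rule elem_eqI)
  fix i x assume i: "i \<in> {1..k}" and x: "x \<in> \<Omega> i"
  have "elem g k v x \<in> \<Omega> i"
    using x by (simp add: elem_apply[OF i x] permutes_in_image[OF g_pow_permutes[OF i]])
  then have "(elem g k u \<circ> elem g k v) x = (g i ^^ (u i + v i)) x"
    by (simp add: elem_apply[OF i] x funpow_add)
  also have "\<dots> = (g i ^^ vadd p u v i) x"
    by (metis g_pow_mod[OF i] vadd_def)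
  finally show "(elem g k u \<circ> elem g k v) x = (g i ^^ vadd p u v i) x" .
qed (simp add: permutes_not_in[OF elem_permutes])

lemma elem_zero: "elem g k (\<lambda>_. 0) = id"
  by (rule sym, rule elem_eqI) simp_all

lemma gamma_elem: "r \<in> vecs p k \<Longrightarrow> gamma g p k (elem g k r) = r"
  unfolding gamma_def by (rule the_equality) (auto dest: inj_onD[OF inj_on_elem])

definition acts_monomially :: "(nat \<Rightarrow> nat) \<Rightarrow> (nat \<Rightarrow> nat) \<Rightarrow> (nat \<Rightarrow> nat) \<Rightarrow> bool" where
  "acts_monomially \<sigma> \<pi> a \<longleftrightarrow> \<sigma> permutes {1..n} \<and> \<pi> permutes {1..k} \<and>
     (\<forall>i\<in>{1..k}. \<sigma> \<circ> g i \<circ> inv' \<sigma> = g (\<pi> i) ^^ a i)"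

lemma acts_monomially_id: "acts_monomially id id (\<lambda>_. 1)"
  by (simp add: acts_monomially_def permutes_id)

lemma acts_monomially_comp:
  assumes \<sigma>: "acts_monomially \<sigma> \<pi> a" and \<tau>: "acts_monomially \<tau> \<rho> b"
  shows "acts_monomially (\<sigma> \<circ> \<tau>) (\<pi> \<circ> \<rho>) (\<lambda>i. a (\<rho> i) * b i)"
  unfolding acts_monomially_def
proof (intro conjI ballI)
  have perms: "\<sigma> permutes {1..n}" "\<tau> permutes {1..n}" "\<pi> permutes {1..k}" "\<rho> permutes {1..k}"
    using \<sigma> \<tau> by (auto simp: acts_monomially_def)
  then show "\<sigma> \<circ> \<tau> permutes {1..n}" "\<pi> \<circ> \<rho> permutes {1..k}"
    by (auto intro: permutes_compose)
  fix i assume i: "i \<in> {1..k}"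
  then have \<rho>i: "\<rho> i \<in> {1..k}"
    using perms(4) by (simp only: permutes_in_image)
  have "(\<sigma> \<circ> \<tau>) \<circ> g i \<circ> inv' (\<sigma> \<circ> \<tau>) = \<sigma> \<circ> (\<tau> \<circ> g i \<circ> inv' \<tau>) \<circ> inv' \<sigma>"
    using perms by (simp add: conj_comp permutes_bij)
  also have "\<dots> = \<sigma> \<circ> g (\<rho> i) ^^ b i \<circ> inv' \<sigma>"
    using \<tau> i by (simp add: acts_monomially_def)
  also have "\<dots> = (\<sigma> \<circ> g (\<rho> i) \<circ> inv' \<sigma>) ^^ b i"
    using perms by (simp add: conj_funpow permutes_bij)
  also have "\<dots> = g (\<pi> (\<rho> i)) ^^ (a (\<rho> i) * b i)"
    using \<sigma> \<rho>i by (simp add: acts_monomially_def funpow_mult)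
  finally show "(\<sigma> \<circ> \<tau>) \<circ> g i \<circ> inv' (\<sigma> \<circ> \<tau>) = g ((\<pi> \<circ> \<rho>) i) ^^ (a (\<rho> i) * b i)"
    by simp
qed

lemma acts_monomially_inverse_exponents:
  assumes \<sigma>: "acts_monomially \<sigma> id a" and \<sigma>': "acts_monomially (inv' \<sigma>) id a'"
    and i: "i \<in> {1..k}"
  shows "[a' i * a i = 1] (mod p)"
proof -
  have "\<sigma> permutes {1..n}"
    using \<sigma> by (simp add: acts_monomially_def)
  then have "inv' \<sigma> \<circ> \<sigma> = id"
    by (rule permutes_inv_o(2))
  then have "acts_monomially id id (\<lambda>i. a' i * a i)"
    using acts_monomially_comp[OF \<sigma>' \<sigma>] by simp
  then have "g i ^^ (a' i * a i) = g i ^^ 1"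
    using i by (simp add: acts_monomially_def)
  then show ?thesis
    by (rule g_pow_eq_imp_cong[OF i])
qed

lemma acts_monomially_maps_block:
  assumes \<sigma>: "acts_monomially \<sigma> \<pi> a" and i: "i \<in> {1..k}" and x: "x \<in> \<Omega> i"
  shows "\<sigma> x \<in> \<Omega> (\<pi> i)"
proof (rule ccontr)
  assume outside: "\<sigma> x \<notin> \<Omega> (\<pi> i)"
  have perms: "\<sigma> permutes {1..n}" "\<pi> permutes {1..k}"
    using \<sigma> by (auto simp: acts_monomially_def)
  have "\<pi> i \<in> {1..k}"
    using perms(2) i by (simp only: permutes_in_image)
  then have "\<sigma> x = (g (\<pi> i) ^^ a i) (\<sigma> x)"
    using outside by (simp add: permutes_not_in[OF g_pow_permutes])
  also have "\<dots> = (\<sigma> \<circ> g i \<circ> inv' \<sigma>) (\<sigma> x)"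
    using \<sigma> i by (simp add: acts_monomially_def)
  also have "\<dots> = \<sigma> (g i x)"
    by (simp add: permutes_inverses(2)[OF perms(1)])
  finally have "g i x = x"
    using permutes_inj[OF perms(1)] by (simp add: inj_eq)
  then show False
    using g_fixpoint_free[OF i x] by simp
qed

lemma conj_elem:
  assumes \<sigma>: "acts_monomially \<sigma> \<pi> a"
  shows "\<sigma> \<circ> elem g k r \<circ> inv' \<sigma> = elem g k (monomial_map p k \<pi> a r)"
proof (rule elem_eqI)
  have perms: "\<sigma> permutes {1..n}" "\<pi> permutes {1..k}"
    using \<sigma> by (auto simp: acts_monomially_def)
  fix j y assume j: "j \<in> {1..k}" and y: "y \<in> \<Omega> j"
  define x where "x = inv' \<sigma> y"
  have y_eq: "y = \<sigma> x"
    unfolding x_def by (simp add: permutes_inverses(1)[OF perms(1)])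
  have "y \<in> {1..n}"
    using block_subset[OF j] y by blast
  then have "x \<in> {1..n}"
    unfolding x_def by (simp only: permutes_in_image[OF permutes_inv[OF perms(1)]])
  then obtain i where i: "i \<in> {1..k}" and x: "x \<in> \<Omega> i"
    using blocks_cover by blast
  have "\<pi> i \<in> {1..k}"
    using perms(2) i by (simp only: permutes_in_image)
  then have j_eq: "j = \<pi> i"
    using block_unique[OF j] y acts_monomially_maps_block[OF \<sigma> i x] y_eq by blast
  have "(\<sigma> \<circ> elem g k r \<circ> inv' \<sigma>) y = (\<sigma> \<circ> g i ^^ r i \<circ> inv' \<sigma>) y"
    by (simp add: x_def[symmetric] elem_apply[OF i x])
  also have "\<sigma> \<circ> g i ^^ r i \<circ> inv' \<sigma> = (\<sigma> \<circ> g i \<circ> inv' \<sigma>) ^^ r i"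
    by (rule conj_funpow[OF permutes_bij[OF perms(1)]])
  also have "\<dots> = g j ^^ (a i * r i)"
    using \<sigma> i j_eq by (simp add: acts_monomially_def funpow_mult)
  also have "\<dots> = g j ^^ monomial_map p k \<pi> a r j"
    using g_pow_mod[OF j] monomial_map_apply[OF perms(2) i] j_eq by simp
  finally show "(\<sigma> \<circ> elem g k r \<circ> inv' \<sigma>) y = (g j ^^ monomial_map p k \<pi> a r j) y" .
next
  fix y assume "y \<notin> {1..n}"
  moreover have "\<sigma> permutes {1..n}"
    using \<sigma> by (simp add: acts_monomially_def)
  ultimately show "(\<sigma> \<circ> elem g k r \<circ> inv' \<sigma>) y = y"
    by (simp add: permutes_not_in[OF permutes_inv] permutes_not_in[OF elem_permutes] permutes_not_in)
qed

lemma normalizer_elem_image_iff: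
  assumes \<sigma>: "acts_monomially \<sigma> \<pi> a" and D: "D \<subseteq> vecs p k"
  shows "\<sigma> \<in> normalizer (sym_group n) (elem g k ` D) \<longleftrightarrow> monomial_map p k \<pi> a ` D = D"
proof -
  have "(\<lambda>h. \<sigma> \<circ> h \<circ> inv' \<sigma>) ` elem g k ` D = elem g k ` monomial_map p k \<pi> a ` D"
    by (simp add: image_image conj_elem[OF \<sigma>])
  moreover have "monomial_map p k \<pi> a ` D \<subseteq> vecs p k"
    using monomial_map_in_vecs p_gt_1 by auto
  ultimately have "(\<lambda>h. \<sigma> \<circ> h \<circ> inv' \<sigma>) ` elem g k ` D = elem g k ` D \<longleftrightarrow> monomial_map p k \<pi> a ` D = D"
    using inj_on_image_eq_iff[OF inj_on_elem _ D] by simp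
  moreover have "elem g k ` D \<subseteq> carrier (sym_group n)"
    using elem_permutes by (auto simp: sym_group_carrier)
  ultimately show ?thesis
    using \<sigma> by (simp add: normalizer_sym_group_iff acts_monomially_def)
qed

lemma normalizer_code_iff_normalizer_perp:
  assumes \<sigma>: "acts_monomially \<sigma> \<pi> a" and \<tau>: "acts_monomially \<tau> \<pi> a'"
    and inverse: "\<And>i. i \<in> {1..k} \<Longrightarrow> [a' i * a i = 1] (mod p)"
    and C: "is_code p k C"
  shows "\<sigma> \<in> normalizer (sym_group n) (elem g k ` C) \<longleftrightarrow>
         \<tau> \<in> normalizer (sym_group n) (elem g k ` perp p k C)"
proof -
  have \<pi>: "\<pi> permutes {1..k}"
    using \<sigma> by (simp add: acts_monomially_def)
  have "\<sigma> \<in> normalizer (sym_group n) (elem g k ` C) \<longleftrightarrow> monomial_map p k \<pi> a ` C = C"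
    using C by (simp add: normalizer_elem_image_iff[OF \<sigma>] is_code_def)
  also have "\<dots> \<longleftrightarrow> monomial_map p k \<pi> a' ` perp p k C = perp p k C"
    using prime_p C p_gt_1
    by (intro image_code_eq_iff_adjoint_image_perp_eq dot_monomial_map_inverse[OF \<pi> inverse])
      (auto simp: monomial_map_in_vecs)
  also have "\<dots> \<longleftrightarrow> \<tau> \<in> normalizer (sym_group n) (elem g k ` perp p k C)"
    by (simp add: normalizer_elem_image_iff[OF \<tau>] perp_def)
  finally show ?thesis .
qed

end

lemma permutes_eqI: "f permutes S \<Longrightarrow> f' permutes S \<Longrightarrow> (\<And>x. x \<in> S \<Longrightarrow> f x = f' x) \<Longrightarrow> f = f'"
  by (metis permutes_not_in ext)

lemma sym_group_pow: "x [^]\<^bsub>sym_group n\<^esub> (m::nat) = x ^^ m"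
  by (induction m) (simp_all add: sym_group_def funpow_Suc_right del: funpow.simps)

lemma phibar_phibar:
  assumes \<phi>: "bij_betw \<phi> A B" and "A \<inter> B = {}"
  shows "phibar A B \<phi> (phibar A B \<phi> x) = x"
proof -
  have "\<phi> x \<in> B" if "x \<in> A" for x
    using \<phi> that by (rule bij_betw_apply)
  moreover have "inv_into A \<phi> x \<in> A" "\<phi> (inv_into A \<phi> x) = x" if "x \<in> B" for x
    using \<phi> that by (auto simp: bij_betw_def inv_into_into f_inv_into_f)
  moreover have "inv_into A \<phi> (\<phi> x) = x" if "x \<in> A" for x
    using \<phi> that by (simp add: bij_betw_def)
  ultimately show ?thesis
    using \<open>A \<inter> B = {}\<close> unfolding phibar_def by auto
qed

lemma phibar_permutes:
  assumes "bij_betw \<phi> A B" "A \<inter> B = {}"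
  shows "phibar A B \<phi> permutes A \<union> B"
proof (rule bij_imp_permutes)
  have "phibar A B \<phi> x \<in> A \<union> B" if "x \<in> A \<union> B" for x
    using that assms by (auto simp: phibar_def bij_betw_apply bij_betw_def inv_into_into)
  then show "bij_betw (phibar A B \<phi>) (A \<union> B) (A \<union> B)"
    using phibar_phibar[OF assms] by (intro bij_betw_byWitness[where f' = "phibar A B \<phi>"]) auto
qed (simp add: phibar_def)

lemma inv_phibar:
  "bij_betw \<phi> A B \<Longrightarrow> A \<inter> B = {} \<Longrightarrow> inv' (phibar A B \<phi>) = phibar A B \<phi>"
  by (rule inv_unique_comp) (simp_all add: fun_eq_iff phibar_phibar)

lemma conj_phibar_eq_map_permutation:
  assumes \<phi>: "bij_betw \<phi> A B" and AB: "A \<inter> B = {}" and f: "f permutes A"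
  shows "phibar A B \<phi> \<circ> f \<circ> phibar A B \<phi> = map_permutation A \<phi> f"
proof
  fix y
  have inj: "inj_on \<phi> A" and B: "\<phi> ` A = B"
    using \<phi> by (auto simp: bij_betw_def)
  consider x where "x \<in> A" "y = \<phi> x" | "y \<in> A" | "y \<notin> A" "y \<notin> B"
    using B by blast
  then show "(phibar A B \<phi> \<circ> f \<circ> phibar A B \<phi>) y = map_permutation A \<phi> f y"
  proof cases
    case 1
    then have "f x \<in> A"
      using f by (simp add: permutes_in_image)
    moreover have "phibar A B \<phi> (\<phi> x) = x"
      using phibar_phibar[OF \<phi> AB, of x] 1 by (simp add: phibar_def)
    ultimately show ?thesis
      using 1 inj by (simp add: map_permutation_apply phibar_def)
  next
    case 2
    then have "\<phi> y \<in> B" "\<phi> y \<notin> A" "y \<notin> B"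
      using B AB by auto
    then show ?thesis
      using 2 phibar_phibar[OF \<phi> AB, of y]
      by (simp add: phibar_def permutes_not_in[OF f] map_permutation_def B)
  next
    case 3
    then show ?thesis
      by (simp add: phibar_def permutes_not_in[OF f] map_permutation_def B)
  qed
qed

locale Cp_block_group =
  fixes p n k :: nat and H :: "(nat \<Rightarrow> nat) set" and \<Omega> :: "nat \<Rightarrow> nat set"
    and \<phi> :: "nat \<Rightarrow> nat \<Rightarrow> nat" and g1 :: "nat \<Rightarrow> nat"
  assumes prime_p: "prime p"
    and subgroup_H: "subgroup H (sym_group n)"
    and card_block: "\<And>i. i \<in> {1..k} \<Longrightarrow> card (\<Omega> i) = p"
    and blocks_disjoint: "\<And>i j. i \<in> {1..k} \<Longrightarrow> j \<in> {1..k} \<Longrightarrow> i \<noteq> j \<Longrightarrow> \<Omega> i \<inter> \<Omega> j = {}"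
    and blocks_cover: "(\<Union>i\<in>{1..k}. \<Omega> i) = {1..n}"
    and orbit_block: "\<And>i x. i \<in> {1..k} \<Longrightarrow> x \<in> \<Omega> i \<Longrightarrow> (\<lambda>h. h x) ` H = \<Omega> i"
    and card_restr_grp: "\<And>i. i \<in> {1..k} \<Longrightarrow> card (restr_grp H (\<Omega> i)) = p"
    and restr_grp_1: "restr_grp H (\<Omega> 1) = generate (sym_group n) {g1}"
    and perm_iso: "\<And>j. j \<in> {2..k} \<Longrightarrow>
           perm_iso_witness (\<phi> j) (\<Omega> 1) (\<Omega> j) (restr_grp H (\<Omega> 1)) (restr_grp H (\<Omega> j))"
begin

abbreviation G :: "nat \<Rightarrow> (nat \<Rightarrow> nat) set" where
  "G i \<equiv> restr_grp H (\<Omega> i)"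

abbreviation P :: "nat \<Rightarrow> nat \<Rightarrow> nat" where
  "P j \<equiv> phibar (\<Omega> 1) (\<Omega> j) (\<phi> j)"

abbreviation g :: "nat \<Rightarrow> nat \<Rightarrow> nat" where
  "g \<equiv> gens (\<Omega> 1) \<Omega> \<phi> g1"

lemma p_gt_1: "1 < p"
  using prime_p prime_gt_1_nat by blast

lemma block_subset: "i \<in> {1..k} \<Longrightarrow> \<Omega> i \<subseteq> {1..n}"
  using blocks_cover by blast

lemma H_permutes: "h \<in> H \<Longrightarrow> h permutes {1..n}"
  using subgroup.subset[OF subgroup_H] by (auto simp: sym_group_carrier)

lemma H_maps_block: "h \<in> H \<Longrightarrow> i \<in> {1..k} \<Longrightarrow> x \<in> \<Omega> i \<Longrightarrow> h x \<in> \<Omega> i"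
  using orbit_block by blast

lemma restr_permutes: "h \<in> H \<Longrightarrow> i \<in> {1..k} \<Longrightarrow> restr h (\<Omega> i) permutes \<Omega> i"
proof (rule inj_imp_permutes)
  assume h: "h \<in> H" and i: "i \<in> {1..k}"
  show "inj_on (restr h (\<Omega> i)) (\<Omega> i)"
    using permutes_inj_on[OF H_permutes[OF h]] by (simp add: restr_def inj_on_def)
  show "finite (\<Omega> i)"
    using block_subset[OF i] finite_subset by blast
  show "restr h (\<Omega> i) x \<in> \<Omega> i" if "x \<in> \<Omega> i" for x
    using H_maps_block[OF h i that] that by (simp add: restr_def)
qed (simp add: restr_def)

lemma G_permutes: "x \<in> G i \<Longrightarrow> i \<in> {1..k} \<Longrightarrow> x permutes \<Omega> i"
  using restr_permutes by (auto simp: restr_grp_def)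

lemma G_comp_closed:
  assumes "x \<in> G i" "y \<in> G i" "i \<in> {1..k}"
  shows "x \<circ> y \<in> G i"
proof -
  obtain h h' where h: "h \<in> H" "h' \<in> H" and xy: "x = restr h (\<Omega> i)" "y = restr h' (\<Omega> i)"
    using assms unfolding restr_grp_def by blast
  have "x \<circ> y = restr (h \<circ> h') (\<Omega> i)"
    using xy H_maps_block[OF h(2) assms(3)] by (auto simp: restr_def fun_eq_iff)
  moreover have "h \<circ> h' \<in> H"
    using subgroup.m_closed[OF subgroup_H h] by (simp add: sym_group_mult)
  ultimately show ?thesis
    unfolding restr_grp_def by blast
qed

lemma id_in_G: "id \<in> G i"
proof -
  have "restr id (\<Omega> i) = id"
    by (simp add: restr_def fun_eq_iff)
  moreover have "id \<in> H"
    using subgroup.one_closed[OF subgroup_H] by (simp add: sym_group_one)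
  ultimately show ?thesis
    unfolding restr_grp_def by (metis image_eqI)
qed

lemma G_pow_closed: "x \<in> G i \<Longrightarrow> i \<in> {1..k} \<Longrightarrow> x ^^ t \<in> G i"
  by (induction t) (simp_all add: id_in_G G_comp_closed)

lemma g1_in_G: "g1 \<in> G 1"
  unfolding restr_grp_1 by (rule generate.incl) simp

context
  assumes k_pos: "1 \<le> k"
begin

lemma g1_permutes: "g1 permutes \<Omega> 1"
  using G_permutes[OF g1_in_G] k_pos by simp

lemma g1_carrier: "g1 \<in> carrier (sym_group n)"
proof -
  have "1 \<in> {1..k}" using k_pos by simp
  then have "g1 permutes {1..n}"
    using g1_permutes block_subset permutes_subset by blast
  then show ?thesis by (simp add: sym_group_carrier)
qed

lemma g1_pow_p: "g1 ^^ p = id"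
proof -
  interpret sym: group "sym_group n"
    by (rule sym_group_is_group)
  have "sym.ord g1 = p"
    using sym.generate_pow_card[OF g1_carrier] restr_grp_1 card_restr_grp[of 1] k_pos by simp
  then show ?thesis
    using sym.pow_ord_eq_1[OF g1_carrier] by (simp add: sym_group_pow sym_group_one)
qed

lemma G1_eq_powers: "G 1 = range ((^^) g1)"
proof -
  interpret sym: group "sym_group n"
    by (rule sym_group_is_group)
  have "finite (carrier (sym_group n))"
    by (simp add: sym_group_def finite_permutations)
  then show ?thesis
    using sym.generate_pow_on_finite_carrier[OF _ g1_carrier] restr_grp_1
    by (auto simp: sym_group_pow)
qed

lemma G1_eq_positive_powers: "G 1 = range (\<lambda>t. g1 ^^ Suc t)"
proof -
  have "g1 ^^ t \<in> range (\<lambda>t. g1 ^^ Suc t)" for t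
  proof (cases t)
    case 0
    then have "g1 ^^ t = g1 ^^ Suc (p - 1)"
      using g1_pow_p p_gt_1 by simp
    then show ?thesis by blast
  qed blast
  then have "range ((^^) g1) \<subseteq> range (\<lambda>t. g1 ^^ Suc t)"
    by blast
  then show ?thesis
    unfolding G1_eq_powers by blast
qed

lemma g1_fixpoint_free: "x \<in> \<Omega> 1 \<Longrightarrow> g1 x \<noteq> x"
proof
  assume x: "x \<in> \<Omega> 1" and fixed: "g1 x = x"
  have one: "1 \<in> {1..k}" using k_pos by simp
  have "\<Omega> 1 \<subseteq> {x}"
  proof
    fix y assume "y \<in> \<Omega> 1"
    then obtain h where h: "h \<in> H" "y = h x"
      using orbit_block[OF one x] by blast
    have "restr h (\<Omega> 1) \<in> G 1"
      using h by (simp add: restr_grp_def)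
    then obtain t where "restr h (\<Omega> 1) = g1 ^^ t"
      using G1_eq_powers by auto
    moreover have "restr h (\<Omega> 1) x = h x"
      using x by (simp add: restr_def)
    ultimately have "y = (g1 ^^ t) x"
      using h by simp
    also have "\<dots> = x"
      by (induction t) (simp_all add: fixed)
    finally show "y \<in> {x}" by simp
  qed
  then have "card (\<Omega> 1) \<le> card {x}"
    by (intro card_mono) simp_all
  then show False
    using card_block[OF one] p_gt_1 by simp
qed

end

context
  fixes j assumes j: "j \<in> {2..k}"
begin

lemma one_le_k: "1 \<le> k"
  using j by simp

lemma block_1_j_disjoint: "\<Omega> 1 \<inter> \<Omega> j = {}"
  using blocks_disjoint[of 1 j] j by simp

lemma bij_betw_phi: "bij_betw (\<phi> j) (\<Omega> 1) (\<Omega> j)"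
  using perm_iso[OF j] by (simp add: perm_iso_witness_def)

lemma g_eq_map_permutation: "g j = map_permutation (\<Omega> 1) (\<phi> j) g1"
  using j conj_phibar_eq_map_permutation[OF bij_betw_phi block_1_j_disjoint g1_permutes[OF one_le_k]]
  by (simp add: gens_def comp_assoc)

lemma g_permutes_block_j: "g j permutes \<Omega> j"
  unfolding g_eq_map_permutation by (rule map_permutation_permutes[OF bij_betw_phi g1_permutes[OF one_le_k]])

lemma g_apply_block_j: "x \<in> \<Omega> 1 \<Longrightarrow> g j (\<phi> j x) = \<phi> j (g1 x)"
  using bij_betw_phi by (simp add: g_eq_map_permutation map_permutation_apply bij_betw_def)

lemma g_pow_apply_block_j: "x \<in> \<Omega> 1 \<Longrightarrow> (g j ^^ t) (\<phi> j x) = \<phi> j ((g1 ^^ t) x)"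
proof (induction t)
  case (Suc t)
  have "(g1 ^^ t) x \<in> \<Omega> 1"
    using Suc.prems g1_permutes[OF one_le_k] by (simp add: permutes_in_image permutes_funpow)
  then show ?case
    using Suc by (simp add: g_apply_block_j)
qed simp

lemma g_pow_p_block_j: "g j ^^ p = id"
proof (rule permutes_eqI[OF permutes_funpow[OF g_permutes_block_j] permutes_id])
  fix y assume "y \<in> \<Omega> j"
  then obtain x where "x \<in> \<Omega> 1" "y = \<phi> j x"
    using bij_betw_phi by (auto simp: bij_betw_def)
  then show "(g j ^^ p) y = id y"
    by (simp add: g_pow_apply_block_j g1_pow_p[OF one_le_k])
qed

lemma g_fixpoint_free_block_j: "y \<in> \<Omega> j \<Longrightarrow> g j y \<noteq> y"
proof
  assume "y \<in> \<Omega> j" "g j y = y"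
  then obtain x where x: "x \<in> \<Omega> 1" and y: "y = \<phi> j x"
    using bij_betw_phi by (auto simp: bij_betw_def)
  then have "\<phi> j (g1 x) = \<phi> j x"
    using g_apply_block_j[OF x] \<open>g j y = y\<close> by simp
  moreover have "g1 x \<in> \<Omega> 1"
    using x g1_permutes[OF one_le_k] by (simp add: permutes_in_image)
  ultimately have "g1 x = x"
    using x bij_betw_imp_inj_on[OF bij_betw_phi] by (simp add: inj_on_eq_iff)
  then show False
    using g1_fixpoint_free[OF one_le_k x] by simp
qed

lemma G_eq_powers_block_j: "G j = range ((^^) (g j))"
proof -
  obtain \<psi> where \<psi>: "bij_betw \<psi> (G 1) (G j)"
    and hom: "\<And>a b. a \<in> G 1 \<Longrightarrow> b \<in> G 1 \<Longrightarrow> \<psi> (a \<circ> b) = \<psi> a \<circ> \<psi> b"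
    and compat: "\<And>a x. a \<in> G 1 \<Longrightarrow> x \<in> \<Omega> 1 \<Longrightarrow> \<phi> j (a x) = \<psi> a (\<phi> j x)"
    using perm_iso[OF j] unfolding perm_iso_witness_def by blast
  have j_in: "j \<in> {1..k}"
    using j by auto
  have "\<psi> g1 = g j"
  proof (rule permutes_eqI[OF G_permutes[OF bij_betw_apply[OF \<psi> g1_in_G] j_in] g_permutes_block_j])
    fix y assume "y \<in> \<Omega> j"
    then obtain x where "x \<in> \<Omega> 1" "y = \<phi> j x"
      using bij_betw_phi by (auto simp: bij_betw_def)
    then show "\<psi> g1 y = g j y"
      using compat[OF g1_in_G] g_apply_block_j by simp
  qed
  have \<psi>_pow: "\<psi> (g1 ^^ Suc t) = g j ^^ Suc t" for t
  proof (induction t)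
    case (Suc t)
    have "g1 ^^ Suc t \<in> G 1"
      using G_pow_closed[OF g1_in_G] one_le_k by (simp del: funpow.simps)
    then have "\<psi> (g1 ^^ Suc (Suc t)) = \<psi> g1 \<circ> \<psi> (g1 ^^ Suc t)"
      unfolding funpow.simps(2)[of "Suc t" g1] by (rule hom[OF g1_in_G])
    also have "\<dots> = g j ^^ Suc (Suc t)"
      unfolding Suc \<open>\<psi> g1 = g j\<close> by (rule funpow.simps(2)[symmetric])
    finally show ?case .
  qed (simp add: \<open>\<psi> g1 = g j\<close>)
  have "G j = range (\<lambda>t. \<psi> (g1 ^^ Suc t))"
    using bij_betw_imp_surj_on[OF \<psi>] G1_eq_positive_powers[OF one_le_k] by (simp only: image_image)
  also have "\<dots> = range (\<lambda>t. g j ^^ Suc t)"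
    by (simp only: \<psi>_pow)
  finally have "G j \<subseteq> range ((^^) (g j))"
    by blast
  moreover have "range ((^^) (g j)) \<subseteq> G j"
    using G_pow_closed[OF _ j_in] bij_betw_apply[OF \<psi> g1_in_G] \<open>\<psi> g1 = g j\<close> by auto
  ultimately show ?thesis
    by blast
qed

end

lemma g_1: "g 1 = g1"
  by (simp add: gens_def)

lemma block_cases: "i \<in> {1..k} \<Longrightarrow> (i = 1 \<Longrightarrow> 1 \<le> k \<Longrightarrow> Q) \<Longrightarrow> (i \<in> {2..k} \<Longrightarrow> Q) \<Longrightarrow> Q"
  by force

lemma G_eq_powers: "i \<in> {1..k} \<Longrightarrow> G i = range ((^^) (g i))"
  by (erule block_cases) (simp_all add: g_1 G1_eq_powers G_eq_powers_block_j)

sublocale block_cycles p n k \<Omega> g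
proof
  fix i assume i: "i \<in> {1..k}"
  show "\<Omega> i \<noteq> {}"
    using card_block[OF i] p_gt_1 by auto
  show "g i permutes \<Omega> i"
    by (rule block_cases[OF i]) (simp_all add: g_1 g1_permutes g_permutes_block_j)
  show "g i ^^ p = id"
    by (rule block_cases[OF i]) (simp_all add: g_1 g1_pow_p g_pow_p_block_j)
  show "g i x \<noteq> x" if "x \<in> \<Omega> i" for x
    by (rule block_cases[OF i]) (use that in \<open>simp_all add: g_1 g1_fixpoint_free g_fixpoint_free_block_j\<close>)
qed (use prime_p blocks_disjoint blocks_cover in auto)

lemma prod_grp_eq: "prod_grp n k \<Omega> G = elem g k ` vecs p k"
proof
  show "elem g k ` vecs p k \<subseteq> prod_grp n k \<Omega> G"
    using elem_permutes restr_elem G_eq_powers by (auto simp: prod_grp_def sym_group_carrier)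
  show "prod_grp n k \<Omega> G \<subseteq> elem g k ` vecs p k"
  proof
    fix x assume x: "x \<in> prod_grp n k \<Omega> G"
    then have "\<forall>i\<in>{1..k}. \<exists>t. restr x (\<Omega> i) = g i ^^ t"
      using G_eq_powers by (auto simp: prod_grp_def)
    then obtain T where T: "\<And>i. i \<in> {1..k} \<Longrightarrow> restr x (\<Omega> i) = g i ^^ T i"
      by metis
    define r where "r = (\<lambda>i. if i \<in> {1..k} then T i mod p else 0)"
    have "r \<in> vecs p k"
      using p_gt_1 by (simp add: r_def vecs_def)
    moreover have "x = elem g k r"
    proof (rule elem_eqI)
      fix i y assume i: "i \<in> {1..k}" and y: "y \<in> \<Omega> i"
      have "x y = restr x (\<Omega> i) y"
        using y by (simp add: restr_def)
      also have "\<dots> = (g i ^^ r i) y"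
        using T[OF i] g_pow_mod[OF i] i by (simp add: r_def)
      finally show "x y = (g i ^^ r i) y" .
    next
      fix y assume "y \<notin> {1..n}"
      moreover have "x permutes {1..n}"
        using x by (simp add: prod_grp_def sym_group_carrier)
      ultimately show "x y = y"
        by (simp add: permutes_not_in)
    qed
    ultimately show "x \<in> elem g k ` vecs p k" by blast
  qed
qed

lemma H_subset_prod_grp: "H \<subseteq> prod_grp n k \<Omega> G"
  using H_permutes by (auto simp: prod_grp_def sym_group_carrier restr_grp_def)

lemma elem_gamma: "x \<in> prod_grp n k \<Omega> G \<Longrightarrow> elem g k (gamma g p k x) = x"
  using prod_grp_eq gamma_elem by auto

lemma gamma_in_vecs: "x \<in> prod_grp n k \<Omega> G \<Longrightarrow> gamma g p k x \<in> vecs p k"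
  using prod_grp_eq gamma_elem by auto

lemma H_eq_elem_image: "H = elem g k ` gamma g p k ` H"
  using elem_gamma H_subset_prod_grp by (force simp: image_image)

lemma is_code_gamma_H: "is_code p k (gamma g p k ` H)"
  unfolding is_code_def
proof (intro conjI ballI)
  show "gamma g p k ` H \<subseteq> vecs p k"
    using gamma_in_vecs H_subset_prod_grp by blast
  have "gamma g p k id = (\<lambda>_. 0)"
    using gamma_elem[OF zero_in_vecs] elem_zero p_gt_1 by simp
  then show "(\<lambda>_. 0) \<in> gamma g p k ` H"
    using subgroup.one_closed[OF subgroup_H] by (metis image_eqI sym_group_one)
  fix u v assume "u \<in> gamma g p k ` H" "v \<in> gamma g p k ` H"
  then obtain h h' where h: "h \<in> H" "h' \<in> H" and uv: "u = gamma g p k h" "v = gamma g p k h'"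
    by blast
  have "elem g k (vadd p u v) = h \<circ> h'"
    using h uv elem_gamma H_subset_prod_grp by (simp add: elem_vadd subset_iff)
  moreover have "h \<circ> h' \<in> H"
    using subgroup.m_closed[OF subgroup_H h] by (simp add: sym_group_mult)
  moreover have "vadd p u v \<in> vecs p k"
    using h uv gamma_in_vecs H_subset_prod_grp p_gt_1 by (intro vadd_in_vecs) auto
  ultimately show "vadd p u v \<in> gamma g p k ` H"
    by (metis gamma_elem image_eqI)
qed

lemma perp_group_eq_elem_image:
  "{x \<in> prod_grp n k \<Omega> G. gamma g p k x \<in> perp p k C} = elem g k ` perp p k C"
proof
  show "{x \<in> prod_grp n k \<Omega> G. gamma g p k x \<in> perp p k C} \<subseteq> elem g k ` perp p k C"
    using elem_gamma by (force simp: image_iff)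
  show "elem g k ` perp p k C \<subseteq> {x \<in> prod_grp n k \<Omega> G. gamma g p k x \<in> perp p k C}"
    using prod_grp_eq gamma_elem by (auto simp: perp_def)
qed

lemma P_permutes: "j \<in> {2..k} \<Longrightarrow> P j permutes {1..n}"
proof -
  assume j: "j \<in> {2..k}"
  have "\<Omega> 1 \<union> \<Omega> j \<subseteq> {1..n}"
    using j block_subset[of 1] block_subset[of j] by auto
  then show ?thesis
    by (rule permutes_subset[OF phibar_permutes[OF bij_betw_phi[OF j] block_1_j_disjoint[OF j]]])
qed

lemma acts_monomially_P: "j \<in> {2..k} \<Longrightarrow> acts_monomially (P j) (transpose 1 j) (\<lambda>_. 1)"
  unfolding acts_monomially_def
proof (intro conjI ballI)
  assume j: "j \<in> {2..k}"
  show "P j permutes {1..n}" by (rule P_permutes[OF j])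
  show "transpose 1 j permutes {1..k}"
    using j by (intro permutes_swap_id) auto
  have inv_P: "inv' (P j) = P j"
    by (rule inv_phibar[OF bij_betw_phi[OF j] block_1_j_disjoint[OF j]])
  have PP: "P j \<circ> P j = id"
    using phibar_phibar[OF bij_betw_phi[OF j] block_1_j_disjoint[OF j]] by (simp add: fun_eq_iff)
  have g_j: "g j = P j \<circ> g1 \<circ> P j"
    using j by (simp add: gens_def)
  fix i assume i: "i \<in> {1..k}"
  consider "i = 1" | "i = j" | "i \<noteq> 1" "i \<noteq> j" by blast
  then show "P j \<circ> g i \<circ> inv' (P j) = g (transpose 1 j i) ^^ 1"
  proof cases
    case 1
    then show ?thesis using g_j by (simp add: inv_P g_1)
  next
    case 2
    have "P j \<circ> g j \<circ> P j = (P j \<circ> P j) \<circ> g1 \<circ> (P j \<circ> P j)"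
      by (simp add: g_j comp_assoc)
    then show ?thesis
      using 2 by (simp add: inv_P PP g_1)
  next
    case 3
    have "\<Omega> i \<inter> (\<Omega> 1 \<union> \<Omega> j) = {}"
      using blocks_disjoint[of i 1] blocks_disjoint[of i j] i j 3 by auto
    then have "P j \<circ> g i \<circ> inv' (P j) = g i"
      by (rule conj_disjoint_permutes[OF g_permutes[OF i]
            phibar_permutes[OF bij_betw_phi[OF j] block_1_j_disjoint[OF j]]])
    then show ?thesis
      using 3 by (simp add:)
  qed
qed

lemma acts_monomially_block_normalizer:
  assumes i: "i \<in> {1..k}" and x: "x \<in> normalizer (sym_group n) (G i)" "x permutes \<Omega> i"
  shows "\<exists>a. acts_monomially x id a"
proof -
  have G_carrier: "G i \<subseteq> carrier (sym_group n)"
    using G_eq_powers[OF i] g_pow_permutes_all[OF i] by (auto simp: sym_group_carrier)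
  have xn: "x permutes {1..n}"
    using x(2) block_subset[OF i] by (rule permutes_subset)
  have "g i = g i ^^ 1"
    by (simp add:)
  then have "g i \<in> G i"
    using G_eq_powers[OF i] by (metis rangeI)
  then have "x \<circ> g i \<circ> inv' x \<in> (\<lambda>h. x \<circ> h \<circ> inv' x) ` G i"
    by blast
  then have "x \<circ> g i \<circ> inv' x \<in> G i"
    using x(1) G_carrier by (simp add: normalizer_sym_group_iff)
  then obtain t where t: "x \<circ> g i \<circ> inv' x = g i ^^ t"
    using G_eq_powers[OF i] by auto
  have "x \<circ> g l \<circ> inv' x = g l" if l: "l \<in> {1..k}" "l \<noteq> i" for l
    using g_permutes[OF l(1)] x(2) blocks_disjoint[OF l(1) i l(2)] by (rule conj_disjoint_permutes)
  then have "acts_monomially x id (\<lambda>l. if l = i then t else 1)"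
    using xn t by (auto simp: acts_monomially_def)
  then show ?thesis by blast
qed

lemma acts_monomially_K:
  "\<kappa> \<in> generate (sym_group n) (P ` {2..k}) \<Longrightarrow> \<exists>\<pi>. acts_monomially \<kappa> \<pi> (\<lambda>_. 1)"
proof (induction rule: generate.induct)
  case one
  then show ?case unfolding sym_group_one using acts_monomially_id by blast
next
  case (incl h)
  then show ?case using acts_monomially_P by blast
next
  case (inv h)
  then obtain j where j: "j \<in> {2..k}" and h: "h = P j" by blast
  then have "inv\<^bsub>sym_group n\<^esub> h = P j"
    using P_permutes[OF j] inv_phibar[OF bij_betw_phi[OF j] block_1_j_disjoint[OF j]]
    by (simp add: sym_group_carrier)
  then show ?case using acts_monomially_P[OF j] by auto
next
  case (eng h1 h2)
  then obtain \<pi>1 \<pi>2 where "acts_monomially h1 \<pi>1 (\<lambda>_. 1)" "acts_monomially h2 \<pi>2 (\<lambda>_. 1)"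
    by blast
  then have "acts_monomially (h1 \<circ> h2) (\<pi>1 \<circ> \<pi>2) (\<lambda>_. 1)"
    using acts_monomially_comp by fastforce
  then show ?case
    unfolding sym_group_mult by blast
qed

lemma acts_monomially_B:
  "b \<in> generate (sym_group n) (\<Union>i\<in>{1..k}. {x \<in> normalizer (sym_group n) (G i). x permutes \<Omega> i})
   \<Longrightarrow> \<exists>a. acts_monomially b id a"
proof (induction rule: generate.induct)
  case one
  then show ?case unfolding sym_group_one using acts_monomially_id by blast
next
  case (incl h)
  then show ?case using acts_monomially_block_normalizer by blast
next
  case (inv h)
  then obtain i where i: "i \<in> {1..k}" and h: "h \<in> normalizer (sym_group n) (G i)" "h permutes \<Omega> i"
    by blast
  interpret sym: group "sym_group n"
    by (rule sym_group_is_group)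
  have "G i \<subseteq> carrier (sym_group n)"
    using G_eq_powers[OF i] g_pow_permutes_all[OF i] by (auto simp: sym_group_carrier)
  then have "inv\<^bsub>sym_group n\<^esub> h \<in> normalizer (sym_group n) (G i)"
    using subgroup.m_inv_closed[OF sym.normalizer_imp_subgroup h(1)] by blast
  moreover have "inv\<^bsub>sym_group n\<^esub> h permutes \<Omega> i"
    using h(2) permutes_subset[OF h(2) block_subset[OF i]] by (simp add: sym_group_carrier permutes_inv)
  ultimately show ?case
    using acts_monomially_block_normalizer[OF i] by blast
next
  case (eng h1 h2)
  then obtain a1 a2 where "acts_monomially h1 id a1" "acts_monomially h2 id a2"
    by blast
  then have "acts_monomially (h1 \<circ> h2) id (\<lambda>i. a1 i * a2 i)"
    using acts_monomially_comp by fastforce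
  then show ?case
    unfolding sym_group_mult by blast
qed

lemma acts_monomially_B_inv:
  assumes b: "b \<in> generate (sym_group n) (\<Union>i\<in>{1..k}. {x \<in> normalizer (sym_group n) (G i). x permutes \<Omega> i})"
  shows "\<exists>a'. acts_monomially (inv' b) id a'"
proof -
  have "(\<Union>i\<in>{1..k}. {x \<in> normalizer (sym_group n) (G i). x permutes \<Omega> i}) \<subseteq> carrier (sym_group n)"
    using block_subset permutes_subset by (fastforce simp: sym_group_carrier)
  then have "inv\<^bsub>sym_group n\<^esub> b
      \<in> generate (sym_group n) (\<Union>i\<in>{1..k}. {x \<in> normalizer (sym_group n) (G i). x permutes \<Omega> i})"
    by (rule subgroup.m_inv_closed[OF group.generate_is_subgroup[OF sym_group_is_group] b])
  moreover obtain a where "acts_monomially b id a"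
    using acts_monomially_B[OF b] by blast
  then have "inv\<^bsub>sym_group n\<^esub> b = inv' b"
    by (simp add: acts_monomially_def sym_group_carrier)
  ultimately show ?thesis
    using acts_monomially_B by auto
qed

end

theorem lemma4p1:
  fixes p n k :: nat and H :: "(nat \<Rightarrow> nat) set" and \<Omega> :: "nat \<Rightarrow> nat set"
    and \<phi> :: "nat \<Rightarrow> nat \<Rightarrow> nat" and g1 b \<kappa> :: "nat \<Rightarrow> nat"
  assumes "prime p"
    and "subgroup H (sym_group n)"
    and "n = p * k"
    and "\<And>i. i \<in> {1..k} \<Longrightarrow> card (\<Omega> i) = p"
    and "\<And>i j. i \<in> {1..k} \<Longrightarrow> j \<in> {1..k} \<Longrightarrow> i \<noteq> j \<Longrightarrow> \<Omega> i \<inter> \<Omega> j = {}"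
    and "(\<Union>i\<in>{1..k}. \<Omega> i) = {1..n}"
    and "\<And>i x. i \<in> {1..k} \<Longrightarrow> x \<in> \<Omega> i \<Longrightarrow> (\<lambda>h. h x) ` H = \<Omega> i"
    and "\<And>i. i \<in> {1..k} \<Longrightarrow> card (restr_grp H (\<Omega> i)) = p \<and>
              (\<exists>c. restr_grp H (\<Omega> i) = generate (sym_group n) {c})"
    and "restr_grp H (\<Omega> 1) = generate (sym_group n) {g1}"
    and "\<And>j. j \<in> {2..k} \<Longrightarrow>
           perm_iso_witness (\<phi> j) (\<Omega> 1) (\<Omega> j) (restr_grp H (\<Omega> 1)) (restr_grp H (\<Omega> j))"
    and "b \<in> generate (sym_group n)
           (\<Union>i\<in>{1..k}. {x \<in> normalizer (sym_group n) (restr_grp H (\<Omega> i)). x permutes \<Omega> i})"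
    and "\<kappa> \<in> generate (sym_group n) ((\<lambda>j. phibar (\<Omega> 1) (\<Omega> j) (\<phi> j)) ` {2..k})"
  shows "\<kappa> \<otimes>\<^bsub>sym_group n\<^esub> b \<in> normalizer (sym_group n) H \<longleftrightarrow>
         \<kappa> \<otimes>\<^bsub>sym_group n\<^esub> inv\<^bsub>sym_group n\<^esub> b \<in> normalizer (sym_group n)
           {x \<in> prod_grp n k \<Omega> (\<lambda>i. restr_grp H (\<Omega> i)).
              gamma (gens (\<Omega> 1) \<Omega> \<phi> g1) p k x
                \<in> perp p k (gamma (gens (\<Omega> 1) \<Omega> \<phi> g1) p k ` H)}"
proof -
  (* n = p * k and the cyclicity of the G_i for i > 1 follow from the other hypotheses. *)
  interpret Cp_block_group p n k H \<Omega> \<phi> g1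
    by (rule Cp_block_group.intro) (use assms(1,2,4-10) in simp_all)
  let ?S = "sym_group n"
  define C where "C = gamma g p k ` H"
  obtain \<pi> where \<kappa>: "acts_monomially \<kappa> \<pi> (\<lambda>_. 1)"
    using acts_monomially_K[OF assms(12)] by blast
  obtain a where b: "acts_monomially b id a"
    using acts_monomially_B[OF assms(11)] by blast
  obtain a' where b': "acts_monomially (inv' b) id a'"
    using acts_monomially_B_inv[OF assms(11)] by blast
  have b_inv: "inv\<^bsub>?S\<^esub> b = inv' b"
    using b by (simp add: acts_monomially_def sym_group_carrier)
  have "acts_monomially (\<kappa> \<circ> b) \<pi> a" "acts_monomially (\<kappa> \<circ> inv' b) \<pi> a'"
    using acts_monomially_comp[OF \<kappa> b] acts_monomially_comp[OF \<kappa> b'] by simp_all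
  then have "\<kappa> \<circ> b \<in> normalizer ?S (elem g k ` C) \<longleftrightarrow> \<kappa> \<circ> inv' b \<in> normalizer ?S (elem g k ` perp p k C)"
    using acts_monomially_inverse_exponents[OF b b'] is_code_gamma_H unfolding C_def
    by (rule normalizer_code_iff_normalizer_perp)
  moreover have "elem g k ` C = H"
    unfolding C_def by (rule H_eq_elem_image[symmetric])
  ultimately show ?thesis
    unfolding sym_group_mult b_inv C_def[symmetric] perp_group_eq_elem_image by simp
qed

end
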